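(* Let $(\mathfrak g_1,\eta_1,\omega_1)$ and $(\mathfrak g_2,\eta_2,\omega_2)$ be two $(2n+1)$-dimensional almost cosymplectic (respectively, $\alpha$-cosymplectic, for a fixed $\alpha\in\mathbb R$) Lie algebras with $d\eta_1=d\eta_2=0$, and for $i=1,2$ let $\mathfrak h_i=\ker\eta_i$, $\Omega_i=\omega_i|_{\mathfrak h_i\times\mathfrak h_i}$ and $D_i=\mathrm{ad}_{\xi_i}|_{\mathfrak h_i}$, where $\xi_i$ is the Reeb vector of $(\eta_i,\omega_i)$. Then $(\mathfrak g_1,\eta_1,\omega_1)$ and $(\mathfrak g_2,\eta_2,\omega_2)$ are isomorphic if and only if there exists an isomorphism $\psi:(\mathfrak h_1,\Omega_1)\to(\mathfrak h_2,\Omega_2)$ of almost symplectic Lie algebras such that $\psi\circ D_1=D_2\circ\psi$.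
   Context: For a Lie algebra, $d\eta(x,y)=-\eta([x,y])$ and $d\omega(x,y,z)=-\omega([x,y],z)-\omega([y,z],x)-\omega([z,x],y)$. An almost cosymplectic structure on a $(2n+1)$-dimensional Lie algebra $\mathfrak g$ is $(\eta,\omega)$, $\eta\in\mathfrak g^*$, $\omega$ a $2$-form, with $\eta\wedge\omega^n\neq0$; its Reeb vector $\xi$ is the unique element with $\eta(\xi)=1$, $\omega(\xi,\cdot)=0$; it is $\alpha$-cosymplectic if $d\eta=0$ and $d\omega=2\alpha\,\eta\wedge\omega$. When $d\eta=0$, $\ker\eta$ is a Lie subalgebra, $\Omega$ is almost symplectic (i.e. $\Omega^n\ne0$) and $D_i$ is a derivation. Two almost cosymplectic Lie algebras are isomorphic if there is a Lie algebra isomorphism $\Psi:\mathfrak g_1\to\mathfrak g_2$ with $\Psi^*\omega_2=\omega_1$ and $\eta_2\circ\Psi=\eta_1$. Two almost symplectic Lie algebras $(\mathfrak h_1,\Omega_1),(\mathfrak h_2,\Omega_2)$ are isomorphic via a Lie algebra isomorphism $\psi$ with $\psi^*\Omega_2=\Omega_1$. *)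

theory Defs
  imports "HOL-Analysis.Analysis"
begin

text \<open>Real Lie algebra structure on a finite-dimensional real vector space (a Euclidean
space type is used only as a carrier for a finite-dimensional real vector space).\<close>

definition lie_algebra :: "('a::real_vector \<Rightarrow> 'a \<Rightarrow> 'a) \<Rightarrow> bool" where
  "lie_algebra br \<longleftrightarrow> bilinear br \<and> (\<forall>x. br x x = 0) \<and>
     (\<forall>x y z. br x (br y z) + br y (br z x) + br z (br x y) = 0)"

definition two_form :: "('a::real_vector \<Rightarrow> 'a \<Rightarrow> real) \<Rightarrow> bool" where
  "two_form \<omega> \<longleftrightarrow> bilinear \<omega> \<and> (\<forall>x. \<omega> x x = 0)"

text \<open>The top-degree form \<eta> \<and> \<omega>^n evaluated on vectors v 0, ..., v (2n),
  up to a nonzero normalising constant (irrelevant for the condition \<noteq> 0).\<close>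
definition eta_wedge_omega_pow ::
  "('a::real_vector \<Rightarrow> real) \<Rightarrow> ('a \<Rightarrow> 'a \<Rightarrow> real) \<Rightarrow> nat \<Rightarrow> (nat \<Rightarrow> 'a) \<Rightarrow> real" where
  "eta_wedge_omega_pow \<eta> \<omega> n v =
     (\<Sum>p | p permutes {0..<2*n+1}.
        of_int (sign p) * \<eta> (v (p 0)) *
        (\<Prod>j<n. \<omega> (v (p (2*j+1))) (v (p (2*j+2)))))"

definition almost_cosymplectic ::
  "nat \<Rightarrow> ('a::real_vector \<Rightarrow> 'a \<Rightarrow> 'a) \<Rightarrow> ('a \<Rightarrow> real) \<Rightarrow> ('a \<Rightarrow> 'a \<Rightarrow> real) \<Rightarrow> bool" where
  "almost_cosymplectic n br \<eta> \<omega> \<longleftrightarrow> lie_algebra br \<and> linear \<eta> \<and> two_form \<omega> \<and>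
     (\<exists>v. eta_wedge_omega_pow \<eta> \<omega> n v \<noteq> 0)"

definition d_eta :: "('a \<Rightarrow> 'a \<Rightarrow> 'a) \<Rightarrow> ('a \<Rightarrow> real) \<Rightarrow> 'a \<Rightarrow> 'a \<Rightarrow> real" where
  "d_eta br \<eta> x y = - \<eta> (br x y)"

definition d_omega :: "('a \<Rightarrow> 'a \<Rightarrow> 'a) \<Rightarrow> ('a \<Rightarrow> 'a \<Rightarrow> real) \<Rightarrow> 'a \<Rightarrow> 'a \<Rightarrow> 'a \<Rightarrow> real" where
  "d_omega br \<omega> x y z = - \<omega> (br x y) z - \<omega> (br y z) x - \<omega> (br z x) y"

definition eta_wedge_omega :: "('a \<Rightarrow> real) \<Rightarrow> ('a \<Rightarrow> 'a \<Rightarrow> real) \<Rightarrow> 'a \<Rightarrow> 'a \<Rightarrow> 'a \<Rightarrow> real" where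
  "eta_wedge_omega \<eta> \<omega> x y z = \<eta> x * \<omega> y z + \<eta> y * \<omega> z x + \<eta> z * \<omega> x y"

definition alpha_cosymplectic ::
  "real \<Rightarrow> nat \<Rightarrow> ('a::real_vector \<Rightarrow> 'a \<Rightarrow> 'a) \<Rightarrow> ('a \<Rightarrow> real) \<Rightarrow> ('a \<Rightarrow> 'a \<Rightarrow> real) \<Rightarrow> bool" where
  "alpha_cosymplectic \<alpha> n br \<eta> \<omega> \<longleftrightarrow> almost_cosymplectic n br \<eta> \<omega> \<and>
     (\<forall>x y. d_eta br \<eta> x y = 0) \<and>
     (\<forall>x y z. d_omega br \<omega> x y z = 2 * \<alpha> * eta_wedge_omega \<eta> \<omega> x y z)"

definition reeb :: "('a \<Rightarrow> real) \<Rightarrow> ('a \<Rightarrow> 'a \<Rightarrow> real) \<Rightarrow> 'a" where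
  "reeb \<eta> \<omega> = (THE \<xi>. \<eta> \<xi> = 1 \<and> (\<forall>y. \<omega> \<xi> y = 0))"

definition acs_iso ::
  "('a::real_vector \<Rightarrow> 'a \<Rightarrow> 'a) \<Rightarrow> ('a \<Rightarrow> real) \<Rightarrow> ('a \<Rightarrow> 'a \<Rightarrow> real) \<Rightarrow>
   ('b::real_vector \<Rightarrow> 'b \<Rightarrow> 'b) \<Rightarrow> ('b \<Rightarrow> real) \<Rightarrow> ('b \<Rightarrow> 'b \<Rightarrow> real) \<Rightarrow> ('a \<Rightarrow> 'b) \<Rightarrow> bool" where
  "acs_iso br1 \<eta>1 \<omega>1 br2 \<eta>2 \<omega>2 \<Psi> \<longleftrightarrow> linear \<Psi> \<and> bij \<Psi> \<and>
     (\<forall>x y. \<Psi> (br1 x y) = br2 (\<Psi> x) (\<Psi> y)) \<and>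
     (\<forall>x y. \<omega>2 (\<Psi> x) (\<Psi> y) = \<omega>1 x y) \<and>
     (\<forall>x. \<eta>2 (\<Psi> x) = \<eta>1 x)"

text \<open>Isomorphism of almost symplectic Lie algebras (h1, \<Omega>1) \<rightarrow> (h2, \<Omega>2), where h_i are
  subalgebras given as subsets with the induced bracket and \<Omega>_i the restriction of \<omega>_i.\<close>
definition as_iso_on ::
  "'a set \<Rightarrow> ('a::real_vector \<Rightarrow> 'a \<Rightarrow> 'a) \<Rightarrow> ('a \<Rightarrow> 'a \<Rightarrow> real) \<Rightarrow>
   'b set \<Rightarrow> ('b::real_vector \<Rightarrow> 'b \<Rightarrow> 'b) \<Rightarrow> ('b \<Rightarrow> 'b \<Rightarrow> real) \<Rightarrow> ('a \<Rightarrow> 'b) \<Rightarrow> bool" where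
  "as_iso_on h1 br1 \<Omega>1 h2 br2 \<Omega>2 \<psi> \<longleftrightarrow>
     (\<forall>x\<in>h1. \<forall>y\<in>h1. \<psi> (x + y) = \<psi> x + \<psi> y) \<and>
     (\<forall>c. \<forall>x\<in>h1. \<psi> (c *\<^sub>R x) = c *\<^sub>R \<psi> x) \<and>
     bij_betw \<psi> h1 h2 \<and>
     (\<forall>x\<in>h1. \<forall>y\<in>h1. \<psi> (br1 x y) = br2 (\<psi> x) (\<psi> y)) \<and>
     (\<forall>x\<in>h1. \<forall>y\<in>h1. \<Omega>2 (\<psi> x) (\<psi> y) = \<Omega>1 x y)"

end

theory Submission
  imports Defs
begin

text \<open>Every \<open>x\<close> splits as \<open>h + \<eta> x \<xi>\<close> with \<open>h \<in> ker \<eta>\<close>. Because \<open>\<eta>\<close> is closed and \<open>\<xi>\<close> spans the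
  radical of \<open>\<omega>\<close>, the bracket and \<open>\<omega>\<close> of two such sums only involve the bracket and \<open>\<Omega>\<close> on the
  kernel and \<open>D = ad \<xi>\<close>. Hence an isomorphism \<open>\<psi>\<close> of the kernels intertwining \<open>D\<^sub>1\<close> and \<open>D\<^sub>2\<close>
  extends to \<open>\<Psi>(h + t \<xi>\<^sub>1) = \<psi> h + t \<xi>\<^sub>2\<close>; conversely an isomorphism \<open>\<Psi>\<close> maps \<open>\<xi>\<^sub>1\<close> to \<open>\<xi>\<^sub>2\<close>
  and so restricts to such a \<open>\<psi>\<close>.

  The real work is the existence and uniqueness of the Reeb vector. If some \<open>x \<noteq> 0\<close> in
  \<open>ker \<eta>\<close> had \<open>\<omega>(x, -) = c \<eta>\<close>, then \<open>\<eta> \<and> \<omega>\<^sup>n\<close> would vanish on a basis starting with \<open>x\<close>, hence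
  everywhere. This gives uniqueness, and existence without a parity argument: if \<open>\<omega>\<close> had
  trivial radical, solving \<open>\<omega>(x, -) = \<eta>\<close> would produce such an \<open>x\<close>.\<close>

section \<open>Alternation of multilinear maps\<close>

definition alternation :: "((nat \<Rightarrow> 'a) \<Rightarrow> real) \<Rightarrow> nat \<Rightarrow> (nat \<Rightarrow> 'a) \<Rightarrow> real" where
  "alternation G m v = (\<Sum>p | p permutes {0..<m}. of_int (sign p) * G (v \<circ> p))"

lemma alternation_permute:
  assumes \<sigma>: "\<sigma> permutes {0..<m}"
  shows "alternation G m (v \<circ> \<sigma>) = of_int (sign \<sigma>) * alternation G m v"
proof -
  have inv\<sigma>: "inv \<sigma> permutes {0..<m}" using \<sigma> by (rule permutes_inv)
  have "alternation G m (v \<circ> \<sigma>) =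
      (\<Sum>p | p permutes {0..<m}. of_int (sign (inv \<sigma> \<circ> p)) * G (v \<circ> \<sigma> \<circ> (inv \<sigma> \<circ> p)))"
    unfolding alternation_def by (rule setum_permutations_compose_left[OF inv\<sigma>])
  also have "\<dots> = (\<Sum>p | p permutes {0..<m}. of_int (sign \<sigma>) * (of_int (sign p) * G (v \<circ> p)))"
  proof (rule sum.cong[OF refl])
    fix p assume "p \<in> {p. p permutes {0..<m}}"
    then have "permutation p" "permutation (inv \<sigma>)" "permutation \<sigma>"
      using \<sigma> inv\<sigma> by (auto intro: permutes_imp_permutation)
    then have "sign (inv \<sigma> \<circ> p) = sign \<sigma> * sign p"
      by (simp add: sign_compose sign_inverse)
    moreover have "v \<circ> \<sigma> \<circ> (inv \<sigma> \<circ> p) = v \<circ> p"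
      by (simp add: o_assoc[symmetric]) (simp add: o_assoc permutes_inv_o(1)[OF \<sigma>])
    ultimately show "of_int (sign (inv \<sigma> \<circ> p)) * G (v \<circ> \<sigma> \<circ> (inv \<sigma> \<circ> p)) =
        of_int (sign \<sigma>) * (of_int (sign p) * G (v \<circ> p))" by simp
  qed
  also have "\<dots> = of_int (sign \<sigma>) * alternation G m v"
    unfolding alternation_def by (simp add: sum_distrib_left)
  finally show ?thesis .
qed

lemma alternation_eq_0_if_repeated:
  assumes "a < m" "b < m" "a \<noteq> b" "v a = v b"
  shows "alternation G m v = 0"
proof -
  let ?t = "Transposition.transpose a b"
  have "?t permutes {0..<m}" using assms by (intro permutes_swap_id) auto
  moreover have "v \<circ> ?t = v" using assms(4) by (auto simp: fun_eq_iff Transposition.transpose_def)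
  ultimately have "alternation G m v = - alternation G m v"
    using alternation_permute[of ?t m G v] assms(3) by (simp add: sign_swap_id)
  then show ?thesis by simp
qed

lemma alternation_cong:
  assumes G: "\<And>w w'. (\<forall>i<m. w i = w' i) \<Longrightarrow> G w = G w'"
    and w: "\<forall>i<m. w i = w' i"
  shows "alternation G m w = alternation G m w'"
  unfolding alternation_def
proof (rule sum.cong[OF refl])
  fix p assume "p \<in> {p. p permutes {0..<m}}"
  then have "\<forall>i<m. (w \<circ> p) i = (w' \<circ> p) i" using w permutes_in_image[of p "{0..<m}"] by auto
  then show "of_int (sign p) * G (w \<circ> p) = of_int (sign p) * G (w' \<circ> p)" using G by metis
qed

lemma linear_alternation_upd:
  assumes G: "\<And>w s. s < m \<Longrightarrow> linear (\<lambda>x. G (w(s := x)))"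
    and s: "s < m"
  shows "linear (\<lambda>x. alternation G m (w(s := x)))"
  unfolding alternation_def
proof (rule real_vector.linear_compose_sum, intro ballI)
  fix p assume "p \<in> {p. p permutes {0..<m}}"
  then have p: "p permutes {0..<m}" by simp
  have upd: "w(s := x) \<circ> p = (w \<circ> p)(inv p s := x)" for x
    using permutes_inverses[OF p] by (auto simp: fun_eq_iff)
  have "inv p s < m" using permutes_in_image[OF permutes_inv[OF p]] s by auto
  then have "linear (\<lambda>x. G ((w \<circ> p)(inv p s := x)))" by (rule G)
  then show "linear (\<lambda>x. of_int (sign p) * G (w(s := x) \<circ> p))"
    by (simp add: upd linear_iff algebra_simps)
qed

lemma alternation_eq_0_on_basis_tuples:
  assumes G: "\<And>w w'. (\<forall>i<m. w i = w' i) \<Longrightarrow> G w = G w'"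
    and b: "alternation G m b = 0"
    and w: "\<forall>j<m. w j \<in> b ` {..<m}"
  shows "alternation G m w = 0"
proof -
  define f where "f j = (SOME i. i < m \<and> w j = b i)" for j
  have f: "f j < m \<and> w j = b (f j)" if "j < m" for j
    unfolding f_def by (rule someI_ex) (use w that in auto)
  show ?thesis
  proof (cases "inj_on f {0..<m}")
    case False
    then obtain i j where "i < m" "j < m" "i \<noteq> j" "f i = f j" unfolding inj_on_def by auto
    then show ?thesis using f by (intro alternation_eq_0_if_repeated[of i m j]) auto
  next
    case True
    define \<sigma> where "\<sigma> j = (if j < m then f j else j)" for j
    have "inj_on \<sigma> {0..<m}" "\<sigma> ` {0..<m} \<subseteq> {0..<m}"
      using True f unfolding inj_on_def \<sigma>_def by auto
    then have "bij_betw \<sigma> {0..<m} {0..<m}"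
      by (simp add: bij_betw_def endo_inj_surj)
    then have \<sigma>: "\<sigma> permutes {0..<m}" by (rule bij_imp_permutes) (simp add: \<sigma>_def)
    have "alternation G m w = alternation G m (b \<circ> \<sigma>)"
      by (rule alternation_cong[OF G]) (use f in \<open>auto simp: \<sigma>_def\<close>)
    also have "\<dots> = 0" using alternation_permute[OF \<sigma>, of G b] b by simp
    finally show ?thesis .
  qed
qed

text \<open>Expand the entries of \<open>w\<close> in the spanning family \<open>b\<close> one at a time; a tuple of entries
  of \<open>b\<close> either repeats an entry or is a permutation of \<open>b\<close>.\<close>
lemma alternation_eq_0_if_eq_0_on_basis:
  fixes G :: "(nat \<Rightarrow> 'a::real_vector) \<Rightarrow> real"
  assumes lin: "\<And>w s. s < m \<Longrightarrow> linear (\<lambda>x. G (w(s := x)))"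
    and G: "\<And>w w'. (\<forall>i<m. w i = w' i) \<Longrightarrow> G w = G w'"
    and span: "\<And>x. \<exists>c. x = (\<Sum>i<m. c i *\<^sub>R b i)"
    and b: "alternation G m b = 0"
  shows "alternation G m w = 0"
proof -
  have partial: "alternation G m w = 0" if "\<forall>j. k \<le> j \<and> j < m \<longrightarrow> w j \<in> b ` {..<m}" for k w
    using that
  proof (induction k arbitrary: w)
    case 0
    then show ?case using alternation_eq_0_on_basis_tuples[OF G b] by simp
  next
    case (Suc k)
    show ?case
    proof (cases "k < m")
      case False
      then show ?thesis using Suc by auto
    next
      case True
      obtain c where c: "w k = (\<Sum>i<m. c i *\<^sub>R b i)" using span by blast
      have L: "linear (\<lambda>x. alternation G m (w(k := x)))"
        by (rule linear_alternation_upd[OF lin True])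
      have "alternation G m w = alternation G m (w(k := \<Sum>i<m. c i *\<^sub>R b i))"
        using c by (metis fun_upd_triv)
      also have "\<dots> = (\<Sum>i<m. c i * alternation G m (w(k := b i)))"
        by (simp only: real_vector.linear_sum[OF L] linear_cmul[OF L] real_scaleR_def)
      also have "\<dots> = 0"
      proof (intro sum.neutral ballI)
        fix i assume "i \<in> {..<m}"
        then have "(w(k := b i)) j \<in> b ` {..<m}" if "k \<le> j" "j < m" for j
          using Suc.prems that by (cases "j = k") auto
        then show "c i * alternation G m (w(k := b i)) = 0" using Suc.IH by simp
      qed
      finally show ?thesis .
    qed
  qed
  show ?thesis by (rule partial[of m]) auto
qed

section \<open>Nondegeneracy of \<open>\<eta> \<and> \<omega>\<^sup>n\<close> and the Reeb vector\<close>

lemma bilinear_antisym: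
  assumes f: "bilinear f" and alt: "\<And>x. f x x = 0"
  shows "f y x = - f x y"
proof -
  have "f (x + y) (x + y) = f x x + f x y + (f y x + f y y)"
    by (simp add: bilinear_ladd[OF f] bilinear_radd[OF f])
  then show ?thesis using alt by (simp add: eq_neg_iff_add_eq_0 add.commute)
qed

lemma two_form_antisym: "two_form \<omega> \<Longrightarrow> \<omega> y x = - \<omega> x y"
  unfolding two_form_def by (blast intro: bilinear_antisym)

definition eta_omega_term :: "('a \<Rightarrow> real) \<Rightarrow> ('a \<Rightarrow> 'a \<Rightarrow> real) \<Rightarrow> nat \<Rightarrow> (nat \<Rightarrow> 'a) \<Rightarrow> real" where
  "eta_omega_term \<eta> \<omega> n w = \<eta> (w 0) * (\<Prod>j<n. \<omega> (w (2*j+1)) (w (2*j+2)))"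

lemma eta_wedge_omega_pow_eq_alternation:
  "eta_wedge_omega_pow \<eta> \<omega> n v = alternation (eta_omega_term \<eta> \<omega> n) (2*n+1) v"
  unfolding eta_wedge_omega_pow_def alternation_def eta_omega_term_def by (simp add: mult.assoc)

lemma eta_omega_term_cong:
  "(\<forall>i<2*n+1. w i = w' i) \<Longrightarrow> eta_omega_term \<eta> \<omega> n w = eta_omega_term \<eta> \<omega> n w'"
  unfolding eta_omega_term_def by (intro arg_cong2[where f="(*)"] prod.cong) auto

lemma linear_eta_omega_term_upd:
  fixes \<eta> :: "'a::real_vector \<Rightarrow> real"
  assumes \<eta>: "linear \<eta>" and \<omega>: "bilinear \<omega>" and s: "s < 2*n+1"
  shows "linear (\<lambda>x. eta_omega_term \<eta> \<omega> n (w(s := x)))"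
proof (cases "s = 0")
  case True
  then show ?thesis using \<eta> by (simp add: eta_omega_term_def linear_iff algebra_simps)
next
  case False
  define j0 where "j0 = (s - 1) div 2"
  have j0: "j0 < n" using s False unfolding j0_def by auto
  have s_j0: "s = 2*j0+1 \<or> s = 2*j0+2" using False unfolding j0_def by presburger
  define R where "R = (\<Prod>j\<in>{..<n}-{j0}. \<omega> (w (2*j+1)) (w (2*j+2)))"
  have other_pairs: "(\<Prod>j\<in>{..<n}-{j0}. \<omega> ((w(s := x)) (2*j+1)) ((w(s := x)) (2*j+2))) = R" for x
    unfolding R_def using s_j0 by (intro prod.cong) auto
  have expand: "eta_omega_term \<eta> \<omega> n (w(s := x)) =
      \<eta> (w 0) * (\<omega> ((w(s := x)) (2*j0+1)) ((w(s := x)) (2*j0+2)) * R)" for x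
    unfolding eta_omega_term_def prod.remove[OF finite_lessThan lessThan_iff[THEN iffD2, OF j0]]
      other_pairs using False by simp
  have "linear (\<lambda>x. \<omega> ((w(s := x)) (2*j0+1)) ((w(s := x)) (2*j0+2)))"
    using s_j0 \<omega> unfolding bilinear_def by auto
  then show ?thesis by (simp add: expand linear_iff algebra_simps)
qed

text \<open>If the \<open>\<eta>\<close>-slot does not vanish it holds \<open>w i1\<close>, so \<open>x\<close> is paired with a vector of \<open>ker \<eta>\<close>,
  which \<open>\<omega>(x, -) = c \<eta>\<close> kills.\<close>
lemma eta_omega_term_eq_0:
  assumes \<omega>: "two_form \<omega>" and x: "\<eta> x = 0" "\<forall>y. \<omega> x y = c * \<eta> y"
    and i0: "i0 < 2*n+1" "w i0 = x"
    and ker: "\<forall>i<2*n+1. i \<noteq> i0 \<and> i \<noteq> i1 \<longrightarrow> \<eta> (w i) = 0"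
  shows "eta_omega_term \<eta> \<omega> n w = 0"
proof (cases "\<eta> (w 0) = 0")
  case True
  then show ?thesis unfolding eta_omega_term_def by simp
next
  case False
  have "i0 \<noteq> 0" using i0(2) x(1) False by metis
  then have "i1 = 0" using ker False by auto
  define j0 where "j0 = (i0 - 1) div 2"
  have j0: "j0 < n" using i0 \<open>i0 \<noteq> 0\<close> unfolding j0_def by auto
  have "\<omega> (w (2*j0+1)) (w (2*j0+2)) = 0"
  proof (cases "i0 = 2*j0+1")
    case True
    then have "\<eta> (w (2*j0+2)) = 0" using ker \<open>i1 = 0\<close> j0 by auto
    then show ?thesis using True i0 x by simp
  next
    case False
    then have "i0 = 2*j0+2" using \<open>i0 \<noteq> 0\<close> unfolding j0_def by presburger
    moreover have "\<eta> (w (2*j0+1)) = 0" using ker \<open>i1 = 0\<close> j0 False by auto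
    ultimately show ?thesis using i0 x two_form_antisym[OF \<omega>, of "w (2*j0+1)" x] by simp
  qed
  then have "(\<Prod>j<n. \<omega> (w (2*j+1)) (w (2*j+2))) = 0" using j0 by (intro prod_zero) auto
  then show ?thesis unfolding eta_omega_term_def by simp
qed

lemma span_image_eq_sum:
  fixes b :: "nat \<Rightarrow> 'a::real_vector"
  assumes "y \<in> span (b ` I)" "finite I"
  shows "\<exists>c. y = (\<Sum>i\<in>I. c i *\<^sub>R b i)"
  using assms(1)
proof (induction rule: real_vector.span_induct_alt)
  case base
  show ?case by (rule exI[of _ "\<lambda>_. 0"]) simp
next
  case (step a x y)
  then obtain k c where k: "k \<in> I" "x = b k" and c: "y = (\<Sum>i\<in>I. c i *\<^sub>R b i)" by auto
  have "(\<Sum>i\<in>I. ((if i = k then a else 0) + c i) *\<^sub>R b i)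
      = (\<Sum>i\<in>I. (if i = k then a *\<^sub>R b i else 0)) + (\<Sum>i\<in>I. c i *\<^sub>R b i)"
    by (simp add: scaleR_add_left sum.distrib if_distrib[of "\<lambda>r. r *\<^sub>R _"] cong: if_cong)
  also have "\<dots> = a *\<^sub>R x + y" using k c assms(2) by (simp only: sum.delta if_True)
  finally show ?case by (intro exI[of _ "\<lambda>i. (if i = k then a else 0) + c i"]) (rule sym)
qed

lemma ex_spanning_seq_extending:
  fixes x e :: "'a::euclidean_space"
  assumes xe: "independent {x, e}" "x \<noteq> e"
  shows "\<exists>b. b 0 = x \<and> b 1 = e \<and> span (b ` {..<DIM('a)}) = UNIV"
proof -
  define B where "B = extend_basis {x, e}"
  have B: "independent B" "span B = UNIV" "{x, e} \<subseteq> B"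
    unfolding B_def using real_vector.independent_extend_basis[OF xe(1)]
      real_vector.extend_basis_superset[OF xe(1)] real_vector.span_extend_basis[OF xe(1)] by auto
  have "finite B" using B(1) by (rule finiteI_independent)
  have "card B = DIM('a)"
    using real_vector.dim_eq_card_independent[OF B(1)] real_vector.dim_span[of B] B(2)
    by (simp add: eucl.dim_UNIV)
  then have "card (B - {x, e}) = DIM('a) - 2"
    using B(3) \<open>finite B\<close> xe(2) by (simp add: card_Diff_subset)
  then obtain h where h: "bij_betw h {0..<DIM('a) - 2} (B - {x, e})"
    using ex_bij_betw_nat_finite[of "B - {x, e}"] \<open>finite B\<close> by auto
  define b where "b k = (if k = 0 then x else if k = 1 then e else h (k - 2))" for k
  have "B \<subseteq> b ` {..<DIM('a)}"
  proof
    fix z assume "z \<in> B"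
    show "z \<in> b ` {..<DIM('a)}"
    proof (cases "z = x \<or> z = e")
      case True
      have "card {x, e} \<le> card B" using B(3) \<open>finite B\<close> by (rule card_mono[rotated])
      then have "2 \<le> DIM('a)" using xe(2) \<open>card B = DIM('a)\<close> by simp
      then show ?thesis using True unfolding b_def by (auto intro!: image_eqI[of _ _ 0] image_eqI[of _ _ 1])
    next
      case False
      then have "z \<in> h ` {0..<DIM('a) - 2}" using \<open>z \<in> B\<close> h by (simp add: bij_betw_def)
      then obtain k where "k < DIM('a) - 2" "z = h k" by auto
      then show ?thesis unfolding b_def by (intro image_eqI[of _ _ "k + 2"]) auto
    qed
  qed
  then have "span (b ` {..<DIM('a)}) = UNIV"
    using B(2) real_vector.span_mono by blast
  moreover have "b 0 = x" "b 1 = e" by (simp_all add: b_def)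
  ultimately show ?thesis by (intro exI[of _ b] conjI)
qed

text \<open>Replace the entries \<open>b\<^sub>k\<close>, \<open>k \<ge> 2\<close>, of a spanning tuple starting with \<open>x, e\<close> by
  \<open>b\<^sub>k - \<eta>(b\<^sub>k) e\<close>.\<close>
lemma ex_spanning_seq_adapted:
  fixes \<eta> :: "'a::euclidean_space \<Rightarrow> real"
  assumes \<eta>: "linear \<eta>" and x: "x \<noteq> 0" "\<eta> x = 0" and e: "\<eta> e = 1"
  shows "\<exists>b. b 0 = x \<and> b 1 = e \<and> (\<forall>k\<ge>2. \<eta> (b k) = 0) \<and>
    (\<forall>y. \<exists>c. y = (\<Sum>i<DIM('a). c i *\<^sub>R b i))"
proof -
  have "x \<notin> span {e}"
  proof
    assume "x \<in> span {e}"
    then obtain k where "x = k *\<^sub>R e" by (auto simp: real_vector.span_singleton)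
    then show False using x e by (simp add: linear_cmul[OF \<eta>])
  qed
  moreover have "e \<noteq> 0" using e linear_0[OF \<eta>] by auto
  ultimately have "independent {x, e}" "x \<noteq> e"
    using x(2) e by (auto simp: real_vector.independent_insert)
  then obtain b where b: "b 0 = x" "b 1 = e" "span (b ` {..<DIM('a)}) = UNIV"
    using ex_spanning_seq_extending by blast
  define b' where "b' k = (if k < 2 then b k else b k - \<eta> (b k) *\<^sub>R e)" for k
  have "card {x, e} \<le> DIM('a)" using independent_bound \<open>independent {x, e}\<close> by blast
  then have "e = b' 1" "1 < DIM('a)" using b(2) \<open>x \<noteq> e\<close> unfolding b'_def by auto
  then have "e \<in> span (b' ` {..<DIM('a)})" by (auto intro: real_vector.span_base)
  have "b k \<in> span (b' ` {..<DIM('a)})" if "k < DIM('a)" for k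
  proof -
    have "b k = b' k + (if k < 2 then 0 else \<eta> (b k)) *\<^sub>R e" unfolding b'_def by simp
    then show ?thesis
      using that \<open>e \<in> span _\<close>
      by (metis imageI lessThan_iff real_vector.span_add real_vector.span_base real_vector.span_scale)
  qed
  then have "span (b ` {..<DIM('a)}) \<subseteq> span (b' ` {..<DIM('a)})"
    by (intro real_vector.span_minimal real_vector.subspace_span) auto
  then have "span (b' ` {..<DIM('a)}) = UNIV" using b(3) by auto
  then have "\<exists>c. y = (\<Sum>i<DIM('a). c i *\<^sub>R b' i)" for y
    by (intro span_image_eq_sum) auto
  moreover have "\<eta> (b' k) = 0" if "k \<ge> 2" for k
    using that e by (simp add: b'_def linear_diff[OF \<eta>] linear_cmul[OF \<eta>])
  moreover have "b' 0 = x" "b' 1 = e" using b by (simp_all add: b'_def)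
  ultimately show ?thesis by (intro exI[of _ b'] conjI allI impI)
qed

text \<open>In terms of forms, \<open>\<iota>\<^sub>x(\<eta> \<and> \<omega>\<^sup>n) = 0\<close>, and a top-degree form with a nonzero vector in its
  kernel vanishes.\<close>
lemma eta_wedge_omega_pow_eq_0:
  fixes \<eta> :: "'a::euclidean_space \<Rightarrow> real"
  assumes dim: "DIM('a) = 2*n+1" and \<eta>: "linear \<eta>" and \<omega>: "two_form \<omega>"
    and x: "x \<noteq> 0" "\<eta> x = 0" "\<forall>y. \<omega> x y = c * \<eta> y"
  shows "eta_wedge_omega_pow \<eta> \<omega> n v = 0"
proof (cases "\<exists>e. \<eta> e \<noteq> 0")
  case False
  then show ?thesis by (simp add: eta_wedge_omega_pow_def)
next
  case True
  then obtain e0 where "\<eta> e0 \<noteq> 0" by blast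
  then have "\<eta> ((1 / \<eta> e0) *\<^sub>R e0) = 1" by (simp add: linear_cmul[OF \<eta>])
  then obtain b where b: "b 0 = x" "b 1 = (1 / \<eta> e0) *\<^sub>R e0" "\<forall>k\<ge>2. \<eta> (b k) = 0"
      "\<And>y. \<exists>c. y = (\<Sum>i<2*n+1. c i *\<^sub>R b i)"
    using ex_spanning_seq_adapted[OF \<eta> x(1,2)] dim by metis
  let ?G = "eta_omega_term \<eta> \<omega> n"
  have zero_on_b: "alternation ?G (2*n+1) b = 0"
    unfolding alternation_def
  proof (intro sum.neutral ballI)
    fix p assume "p \<in> {p. p permutes {0..<2*n+1}}"
    then have p: "p permutes {0..<2*n+1}" by simp
    have "?G (b \<circ> p) = 0"
    proof (rule eta_omega_term_eq_0[OF \<omega> x(2,3), of "inv p 0" n _ "inv p 1"])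
      show "inv p 0 < 2*n+1" using permutes_in_image[OF permutes_inv[OF p], of 0] by simp
      show "(b \<circ> p) (inv p 0) = x" using permutes_inverses(1)[OF p] b(1) by simp
      show "\<forall>i<2*n+1. i \<noteq> inv p 0 \<and> i \<noteq> inv p 1 \<longrightarrow> \<eta> ((b \<circ> p) i) = 0"
      proof (intro allI impI)
        fix i assume "i < 2*n+1" "i \<noteq> inv p 0 \<and> i \<noteq> inv p 1"
        then have "p i \<noteq> 0" "p i \<noteq> 1" using permutes_inverses(2)[OF p] by metis+
        then show "\<eta> ((b \<circ> p) i) = 0" using b(3) by simp
      qed
    qed
    then show "of_int (sign p) * ?G (b \<circ> p) = 0" by simp
  qed
  have "bilinear \<omega>" using \<omega> unfolding two_form_def by simp
  then have "alternation ?G (2*n+1) v = 0"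
    by (rule alternation_eq_0_if_eq_0_on_basis[OF linear_eta_omega_term_upd[OF \<eta>]
          eta_omega_term_cong b(4) zero_on_b])
  then show ?thesis by (simp add: eta_wedge_omega_pow_eq_alternation)
qed

lemma inner_sum_Basis_scaleR:
  fixes y :: "'a::euclidean_space"
  assumes "linear f"
  shows "(\<Sum>i\<in>Basis. f i *\<^sub>R i) \<bullet> y = f y"
proof -
  have "(\<Sum>i\<in>Basis. f i *\<^sub>R i) \<bullet> y = (\<Sum>i\<in>Basis. f i * (i \<bullet> y))"
    by (simp add: inner_sum_left)
  also have "\<dots> = f (\<Sum>i\<in>Basis. (y \<bullet> i) *\<^sub>R i)"
    by (simp add: real_vector.linear_sum[OF assms] linear_cmul[OF assms] inner_commute mult.commute)
  finally show ?thesis by (simp add: euclidean_representation)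
qed

text \<open>If \<open>\<omega>\<close> were nondegenerate, \<open>\<omega> x = \<eta>\<close> would be solvable, and then \<open>\<eta> x = \<omega> x x = 0\<close>
  contradicts \<open>eta_wedge_omega_pow_eq_0\<close>; so \<open>\<omega>\<close> has a radical vector, necessarily outside
  \<open>ker \<eta>\<close>.\<close>
lemma ex_reeb_vector:
  fixes \<eta> :: "'a::euclidean_space \<Rightarrow> real"
  assumes dim: "DIM('a) = 2*n+1" and \<eta>: "linear \<eta>" and \<omega>: "two_form \<omega>"
    and nondeg: "eta_wedge_omega_pow \<eta> \<omega> n v \<noteq> 0"
  shows "\<exists>\<xi>. \<eta> \<xi> = 1 \<and> (\<forall>y. \<omega> \<xi> y = 0)"
proof -
  have \<omega>_left: "linear (\<lambda>x. \<omega> x y)" and \<omega>_right: "linear (\<omega> x)" for x y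
    using \<omega> unfolding two_form_def bilinear_def by auto
  obtain z where z: "z \<noteq> 0" "\<forall>y. \<omega> z y = 0"
  proof (rule ccontr)
    assume no_radical: "\<not> thesis"
    define M where "M x = (\<Sum>i\<in>Basis. \<omega> x i *\<^sub>R i)" for x
    have M: "M x \<bullet> y = \<omega> x y" for x y
      unfolding M_def by (rule inner_sum_Basis_scaleR[OF \<omega>_right])
    have linear_M: "linear M"
      unfolding linear_iff M_def
      by (simp add: linear_add[OF \<omega>_left] linear_cmul[OF \<omega>_left] scaleR_add_left sum.distrib
          scaleR_sum_right)
    moreover have "inj M"
    proof (rule injI)
      fix a c assume "M a = M c"
      then have "M (a - c) = 0" by (simp add: linear_diff[OF linear_M])
      then have "\<forall>y. \<omega> (a - c) y = 0" using M by (metis inner_zero_left)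
      then show "a = c" using no_radical that[of "a - c"] by auto
    qed
    ultimately obtain x where x: "M x = (\<Sum>i\<in>Basis. \<eta> i *\<^sub>R i)"
      using eucl.linear_injective_imp_surjective by (metis surjD)
    then have \<omega>x: "\<forall>y. \<omega> x y = 1 * \<eta> y"
      using M inner_sum_Basis_scaleR[OF \<eta>] by (metis mult_1)
    then have "\<eta> x = 0" using \<omega> unfolding two_form_def by (metis mult_1)
    moreover have "x \<noteq> 0"
    proof
      assume "x = 0"
      then have "\<forall>y. \<eta> y = 0" using \<omega>x linear_0[OF \<omega>_left] by simp
      then show False using nondeg by (simp add: eta_wedge_omega_pow_def)
    qed
    ultimately show False using eta_wedge_omega_pow_eq_0[OF dim \<eta> \<omega> _ _ \<omega>x] nondeg by blast
  qed
  have "\<eta> z \<noteq> 0" using eta_wedge_omega_pow_eq_0[OF dim \<eta> \<omega> z(1), of 0] z(2) nondeg by auto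
  then have "\<eta> ((1 / \<eta> z) *\<^sub>R z) = 1 \<and> (\<forall>y. \<omega> ((1 / \<eta> z) *\<^sub>R z) y = 0)"
    using z(2) by (simp add: linear_cmul[OF \<eta>] linear_cmul[OF \<omega>_left])
  then show ?thesis by blast
qed

lemma reeb_vector_unique:
  fixes \<eta> :: "'a::euclidean_space \<Rightarrow> real"
  assumes dim: "DIM('a) = 2*n+1" and \<eta>: "linear \<eta>" and \<omega>: "two_form \<omega>"
    and nondeg: "eta_wedge_omega_pow \<eta> \<omega> n v \<noteq> 0"
    and \<xi>: "\<eta> \<xi> = 1" "\<forall>y. \<omega> \<xi> y = 0" and \<xi>': "\<eta> \<xi>' = 1" "\<forall>y. \<omega> \<xi>' y = 0"
  shows "\<xi> = \<xi>'"
proof (rule ccontr)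
  assume "\<xi> \<noteq> \<xi>'"
  then have "\<xi> - \<xi>' \<noteq> 0" by simp
  moreover have "\<eta> (\<xi> - \<xi>') = 0" using \<xi> \<xi>' by (simp add: linear_diff[OF \<eta>])
  moreover have "\<forall>y. \<omega> (\<xi> - \<xi>') y = 0 * \<eta> y"
    using \<xi> \<xi>' \<omega> unfolding two_form_def by (simp add: bilinear_lsub)
  ultimately show False using eta_wedge_omega_pow_eq_0[OF dim \<eta> \<omega>, of "\<xi> - \<xi>'" 0 v] nondeg by blast
qed

lemma
  fixes \<eta> :: "'a::euclidean_space \<Rightarrow> real"
  assumes "DIM('a) = 2*n+1" "almost_cosymplectic n br \<eta> \<omega>"
  shows reeb_eta: "\<eta> (reeb \<eta> \<omega>) = 1"
    and reeb_radical: "\<omega> (reeb \<eta> \<omega>) y = 0"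
    and reeb_unique: "\<eta> \<xi> = 1 \<Longrightarrow> \<forall>y. \<omega> \<xi> y = 0 \<Longrightarrow> reeb \<eta> \<omega> = \<xi>"
proof -
  obtain v where "linear \<eta>" "two_form \<omega>" "eta_wedge_omega_pow \<eta> \<omega> n v \<noteq> 0"
    using assms(2) unfolding almost_cosymplectic_def by blast
  note ex_reeb_vector[OF assms(1) this] reeb_vector_unique[OF assms(1) this]
  then have unique: "\<exists>!\<xi>. \<eta> \<xi> = 1 \<and> (\<forall>y. \<omega> \<xi> y = 0)" by blast
  from theI'[OF unique] show "\<eta> (reeb \<eta> \<omega>) = 1" "\<omega> (reeb \<eta> \<omega>) y = 0"
    unfolding reeb_def by auto
  show "\<eta> \<xi> = 1 \<Longrightarrow> \<forall>y. \<omega> \<xi> y = 0 \<Longrightarrow> reeb \<eta> \<omega> = \<xi>"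
    unfolding reeb_def by (rule the1_equality[OF unique]) simp
qed

section \<open>Restricting and extending isomorphisms\<close>

lemma two_form_add_radical:
  assumes \<omega>: "two_form \<omega>" and \<xi>: "\<forall>y. \<omega> \<xi> y = 0"
  shows "\<omega> (u + a *\<^sub>R \<xi>) (v + c *\<^sub>R \<xi>) = \<omega> u v"
proof -
  have b: "bilinear \<omega>" using \<omega> unfolding two_form_def by simp
  have "\<omega> y \<xi> = 0" for y using two_form_antisym[OF \<omega>, of y \<xi>] \<xi> by simp
  then show ?thesis
    using \<xi> by (simp add: bilinear_ladd[OF b] bilinear_radd[OF b] bilinear_lmul[OF b] bilinear_rmul[OF b])
qed

lemma lie_bracket_add_scaleR:
  assumes "lie_algebra br"
  shows "br (h + a *\<^sub>R \<xi>) (k + c *\<^sub>R \<xi>) = br h k - c *\<^sub>R br \<xi> h + a *\<^sub>R br \<xi> k"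
proof -
  have b: "bilinear br" and alt: "\<And>x. br x x = 0" using assms unfolding lie_algebra_def by auto
  have "br h \<xi> = - br \<xi> h" by (rule bilinear_antisym[OF b alt])
  then show ?thesis
    by (simp add: bilinear_ladd[OF b] bilinear_radd[OF b] bilinear_lmul[OF b] bilinear_rmul[OF b]
        alt algebra_simps)
qed

text \<open>An isomorphism maps the Reeb vector to the Reeb vector, hence intertwines the
  derivations \<open>ad \<xi>\<close> of the kernels.\<close>
lemma acs_iso_restrict_kernel:
  assumes \<Psi>: "acs_iso br1 \<eta>1 \<omega>1 br2 \<eta>2 \<omega>2 \<Psi>"
    and \<xi>1: "\<eta>1 \<xi>1 = 1" "\<forall>y. \<omega>1 \<xi>1 y = 0"
    and \<xi>2_unique: "\<And>\<xi>. \<eta>2 \<xi> = 1 \<Longrightarrow> \<forall>y. \<omega>2 \<xi> y = 0 \<Longrightarrow> \<xi>2 = \<xi>"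
  shows "as_iso_on {x. \<eta>1 x = 0} br1 \<omega>1 {x. \<eta>2 x = 0} br2 \<omega>2 \<Psi> \<and>
    (\<forall>x\<in>{x. \<eta>1 x = 0}. \<Psi> (br1 \<xi>1 x) = br2 \<xi>2 (\<Psi> x))"
proof -
  have lin: "linear \<Psi>" and "bij \<Psi>" and br: "\<And>x y. \<Psi> (br1 x y) = br2 (\<Psi> x) (\<Psi> y)"
    and \<omega>: "\<And>x y. \<omega>2 (\<Psi> x) (\<Psi> y) = \<omega>1 x y" and \<eta>: "\<And>x. \<eta>2 (\<Psi> x) = \<eta>1 x"
    using \<Psi> unfolding acs_iso_def by auto
  have "\<Psi> ` {x. \<eta>1 x = 0} = {x. \<eta>2 x = 0}"
  proof
    show "\<Psi> ` {x. \<eta>1 x = 0} \<subseteq> {x. \<eta>2 x = 0}" using \<eta> by auto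
    show "{x. \<eta>2 x = 0} \<subseteq> \<Psi> ` {x. \<eta>1 x = 0}"
    proof
      fix y assume "y \<in> {x. \<eta>2 x = 0}"
      moreover obtain x where "y = \<Psi> x" using \<open>bij \<Psi>\<close> by (blast elim: bij_pointE)
      ultimately show "y \<in> \<Psi> ` {x. \<eta>1 x = 0}" using \<eta> by auto
    qed
  qed
  then have "bij_betw \<Psi> {x. \<eta>1 x = 0} {x. \<eta>2 x = 0}"
    using \<open>bij \<Psi>\<close> by (auto simp: bij_betw_def bij_def intro: inj_on_subset)
  moreover have "\<Psi> \<xi>1 = \<xi>2"
  proof (rule \<xi>2_unique[symmetric])
    show "\<eta>2 (\<Psi> \<xi>1) = 1" using \<eta> \<xi>1(1) by simp
    show "\<forall>y. \<omega>2 (\<Psi> \<xi>1) y = 0"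
      using \<omega> \<xi>1(2) \<open>bij \<Psi>\<close> by (metis bij_pointE)
  qed
  ultimately show ?thesis
    unfolding as_iso_on_def using lin br \<omega> by (simp add: linear_add linear_cmul)
qed

locale kernel_iso =
  fixes \<eta>1 :: "'a::real_vector \<Rightarrow> real" and \<xi>1 :: 'a and br1 :: "'a \<Rightarrow> 'a \<Rightarrow> 'a"
    and \<omega>1 :: "'a \<Rightarrow> 'a \<Rightarrow> real"
    and \<eta>2 :: "'b::real_vector \<Rightarrow> real" and \<xi>2 :: 'b and br2 :: "'b \<Rightarrow> 'b \<Rightarrow> 'b"
    and \<omega>2 :: "'b \<Rightarrow> 'b \<Rightarrow> real" and \<psi> :: "'a \<Rightarrow> 'b"
  assumes linear_\<eta>1: "linear \<eta>1" and linear_\<eta>2: "linear \<eta>2"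
    and \<eta>1_\<xi>1: "\<eta>1 \<xi>1 = 1" and \<eta>2_\<xi>2: "\<eta>2 \<xi>2 = 1"
    and iso: "as_iso_on {x. \<eta>1 x = 0} br1 \<omega>1 {x. \<eta>2 x = 0} br2 \<omega>2 \<psi>"
begin

lemma
  assumes "\<eta>1 h = 0" "\<eta>1 k = 0"
  shows \<psi>_add: "\<psi> (h + k) = \<psi> h + \<psi> k"
    and \<psi>_bracket: "\<psi> (br1 h k) = br2 (\<psi> h) (\<psi> k)"
    and \<psi>_form: "\<omega>2 (\<psi> h) (\<psi> k) = \<omega>1 h k"
  using iso assms unfolding as_iso_on_def by auto

lemma \<psi>_scaleR: "\<eta>1 h = 0 \<Longrightarrow> \<psi> (c *\<^sub>R h) = c *\<^sub>R \<psi> h"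
  using iso unfolding as_iso_on_def by auto

lemma bij_betw_\<psi>: "bij_betw \<psi> {x. \<eta>1 x = 0} {x. \<eta>2 x = 0}"
  using iso unfolding as_iso_on_def by auto

lemma \<eta>2_\<psi>: "\<eta>1 h = 0 \<Longrightarrow> \<eta>2 (\<psi> h) = 0"
  using bij_betw_\<psi> unfolding bij_betw_def by auto

definition proj :: "'a \<Rightarrow> 'a" where
  "proj x = x - \<eta>1 x *\<^sub>R \<xi>1"

definition extension :: "'a \<Rightarrow> 'b" where
  "extension x = \<psi> (proj x) + \<eta>1 x *\<^sub>R \<xi>2"

lemma \<eta>1_proj: "\<eta>1 (proj x) = 0"
  unfolding proj_def using \<eta>1_\<xi>1 by (simp add: linear_diff[OF linear_\<eta>1] linear_cmul[OF linear_\<eta>1])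

lemma proj_decomp: "x = proj x + \<eta>1 x *\<^sub>R \<xi>1"
  unfolding proj_def by simp

lemma proj_kernel: "\<eta>1 x = 0 \<Longrightarrow> proj x = x"
  unfolding proj_def by simp

lemma \<eta>2_extension: "\<eta>2 (extension x) = \<eta>1 x"
  unfolding extension_def using \<eta>2_\<psi>[OF \<eta>1_proj] \<eta>2_\<xi>2
  by (simp add: linear_add[OF linear_\<eta>2] linear_cmul[OF linear_\<eta>2])

lemma linear_extension: "linear extension"
proof (rule linearI)
  fix x y
  have "proj (x + y) = proj x + proj y"
    unfolding proj_def by (simp add: linear_add[OF linear_\<eta>1] algebra_simps)
  then show "extension (x + y) = extension x + extension y"
    unfolding extension_def using \<psi>_add[OF \<eta>1_proj \<eta>1_proj]
    by (simp add: linear_add[OF linear_\<eta>1] algebra_simps)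
next
  fix c x
  have "proj (c *\<^sub>R x) = c *\<^sub>R proj x"
    unfolding proj_def by (simp add: linear_cmul[OF linear_\<eta>1] algebra_simps)
  then show "extension (c *\<^sub>R x) = c *\<^sub>R extension x"
    unfolding extension_def using \<psi>_scaleR[OF \<eta>1_proj]
    by (simp add: linear_cmul[OF linear_\<eta>1] algebra_simps)
qed

lemma bij_extension: "bij extension"
proof (rule bijI)
  show "inj extension"
  proof (rule injI)
    fix x y assume eq: "extension x = extension y"
    then have "\<eta>1 x = \<eta>1 y" using \<eta>2_extension by metis
    with eq have "\<psi> (proj x) = \<psi> (proj y)" unfolding extension_def by simp
    then have "proj x = proj y"
      using bij_betw_\<psi> \<eta>1_proj unfolding bij_betw_def inj_on_def by auto
    then show "x = y" using proj_decomp[of x] proj_decomp[of y] \<open>\<eta>1 x = \<eta>1 y\<close> by metis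
  qed
  show "surj extension"
  proof (rule surjI)
    fix y
    have "\<eta>2 (y - \<eta>2 y *\<^sub>R \<xi>2) = 0"
      using \<eta>2_\<xi>2 by (simp add: linear_diff[OF linear_\<eta>2] linear_cmul[OF linear_\<eta>2])
    then obtain h where h: "\<eta>1 h = 0" "\<psi> h = y - \<eta>2 y *\<^sub>R \<xi>2"
      using bij_betw_\<psi> unfolding bij_betw_def by (metis (mono_tags, lifting) imageE mem_Collect_eq)
    define x where "x = h + \<eta>2 y *\<^sub>R \<xi>1"
    have "\<eta>1 x = \<eta>2 y"
      unfolding x_def using h \<eta>1_\<xi>1 by (simp add: linear_add[OF linear_\<eta>1] linear_cmul[OF linear_\<eta>1])
    then have "proj x = h" unfolding proj_def x_def by simp
    then have "extension x = y" unfolding extension_def \<open>\<eta>1 x = \<eta>2 y\<close> using h(2) by simp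
    then show "extension (SOME x. extension x = y) = y" by (rule someI)
  qed
qed

lemma extension_form:
  assumes "two_form \<omega>1" "\<forall>y. \<omega>1 \<xi>1 y = 0" "two_form \<omega>2" "\<forall>y. \<omega>2 \<xi>2 y = 0"
  shows "\<omega>2 (extension x) (extension y) = \<omega>1 x y"
proof -
  have "\<omega>2 (extension x) (extension y) = \<omega>2 (\<psi> (proj x)) (\<psi> (proj y))"
    unfolding extension_def by (rule two_form_add_radical[OF assms(3,4)])
  also have "\<dots> = \<omega>1 (proj x) (proj y)" by (rule \<psi>_form[OF \<eta>1_proj \<eta>1_proj])
  also have "\<dots> = \<omega>1 (proj x + \<eta>1 x *\<^sub>R \<xi>1) (proj y + \<eta>1 y *\<^sub>R \<xi>1)"
    by (rule two_form_add_radical[OF assms(1,2), symmetric])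
  finally show ?thesis by (simp flip: proj_decomp)
qed

text \<open>Since \<open>\<eta>1\<close> is closed, \<open>[x, y]\<close> lies in the kernel, and the bracket of \<open>h + a \<xi>1\<close> and
  \<open>k + c \<xi>1\<close> is \<open>[h, k] - c D h + a D k\<close>: it only involves the data that \<open>\<psi>\<close> preserves.\<close>
lemma extension_bracket:
  assumes "lie_algebra br1" "lie_algebra br2"
    and closed: "\<And>x y. \<eta>1 (br1 x y) = 0"
    and D: "\<And>h. \<eta>1 h = 0 \<Longrightarrow> \<psi> (br1 \<xi>1 h) = br2 \<xi>2 (\<psi> h)"
  shows "extension (br1 x y) = br2 (extension x) (extension y)"
proof -
  let ?a = "\<eta>1 x" and ?c = "\<eta>1 y" and ?h = "proj x" and ?k = "proj y"
  have hk: "\<eta>1 ?h = 0" "\<eta>1 ?k = 0" by (rule \<eta>1_proj)+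
  have "br1 x y = br1 (?h + ?a *\<^sub>R \<xi>1) (?k + ?c *\<^sub>R \<xi>1)" by (simp flip: proj_decomp)
  also have "\<dots> = br1 ?h ?k + ((- ?c) *\<^sub>R br1 \<xi>1 ?h + ?a *\<^sub>R br1 \<xi>1 ?k)"
    by (simp add: lie_bracket_add_scaleR[OF assms(1)])
  finally have x_y: "br1 x y = br1 ?h ?k + ((- ?c) *\<^sub>R br1 \<xi>1 ?h + ?a *\<^sub>R br1 \<xi>1 ?k)" .
  have ker: "\<eta>1 ((- ?c) *\<^sub>R br1 \<xi>1 ?h) = 0" "\<eta>1 (?a *\<^sub>R br1 \<xi>1 ?k) = 0"
    "\<eta>1 ((- ?c) *\<^sub>R br1 \<xi>1 ?h + ?a *\<^sub>R br1 \<xi>1 ?k) = 0"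
    using closed
    by (simp_all only: linear_cmul[OF linear_\<eta>1] linear_add[OF linear_\<eta>1] scaleR_zero_right add_0)
  have "extension (br1 x y) = \<psi> (br1 x y)"
    unfolding extension_def using proj_kernel[OF closed] closed by simp
  also have "\<dots> = \<psi> (br1 ?h ?k) + ((- ?c) *\<^sub>R \<psi> (br1 \<xi>1 ?h) + ?a *\<^sub>R \<psi> (br1 \<xi>1 ?k))"
    unfolding x_y by (simp only: \<psi>_add[OF closed ker(3)] \<psi>_add[OF ker(1,2)] \<psi>_scaleR[OF closed])
  also have "\<dots> = br2 (\<psi> ?h) (\<psi> ?k) + ((- ?c) *\<^sub>R br2 \<xi>2 (\<psi> ?h) + ?a *\<^sub>R br2 \<xi>2 (\<psi> ?k))"
    by (simp only: \<psi>_bracket[OF hk] D[OF hk(1)] D[OF hk(2)])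
  also have "\<dots> = br2 (\<psi> ?h + ?a *\<^sub>R \<xi>2) (\<psi> ?k + ?c *\<^sub>R \<xi>2)"
    by (simp add: lie_bracket_add_scaleR[OF assms(2)])
  also have "\<dots> = br2 (extension x) (extension y)" unfolding extension_def ..
  finally show ?thesis .
qed

lemma acs_iso_extension:
  assumes "lie_algebra br1" "lie_algebra br2"
    and "two_form \<omega>1" "\<forall>y. \<omega>1 \<xi>1 y = 0" "two_form \<omega>2" "\<forall>y. \<omega>2 \<xi>2 y = 0"
    and "\<And>x y. \<eta>1 (br1 x y) = 0"
    and "\<And>h. \<eta>1 h = 0 \<Longrightarrow> \<psi> (br1 \<xi>1 h) = br2 \<xi>2 (\<psi> h)"
  shows "acs_iso br1 \<eta>1 \<omega>1 br2 \<eta>2 \<omega>2 extension"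
  unfolding acs_iso_def
  using linear_extension bij_extension extension_bracket[OF assms(1,2,7,8)]
    extension_form[OF assms(3-6)] \<eta>2_extension by blast

end

theorem mainTheorem8:
  fixes n :: nat
    and br1 :: "'a::euclidean_space \<Rightarrow> 'a \<Rightarrow> 'a" and \<eta>1 :: "'a \<Rightarrow> real" and \<omega>1 :: "'a \<Rightarrow> 'a \<Rightarrow> real"
    and br2 :: "'b::euclidean_space \<Rightarrow> 'b \<Rightarrow> 'b" and \<eta>2 :: "'b \<Rightarrow> real" and \<omega>2 :: "'b \<Rightarrow> 'b \<Rightarrow> real"
  assumes dim1: "DIM('a) = 2 * n + 1" and dim2: "DIM('b) = 2 * n + 1"
    and acs1: "almost_cosymplectic n br1 \<eta>1 \<omega>1"
    and acs2: "almost_cosymplectic n br2 \<eta>2 \<omega>2"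
    and closed1: "\<forall>x y. d_eta br1 \<eta>1 x y = 0"
    and closed2: "\<forall>x y. d_eta br2 \<eta>2 x y = 0"
  shows "(\<exists>\<Psi>. acs_iso br1 \<eta>1 \<omega>1 br2 \<eta>2 \<omega>2 \<Psi>) \<longleftrightarrow>
         (\<exists>\<psi>. as_iso_on {x. \<eta>1 x = 0} br1 \<omega>1 {x. \<eta>2 x = 0} br2 \<omega>2 \<psi> \<and>
               (\<forall>x\<in>{x. \<eta>1 x = 0}. \<psi> (br1 (reeb \<eta>1 \<omega>1) x) = br2 (reeb \<eta>2 \<omega>2) (\<psi> x)))"
proof
  assume "\<exists>\<Psi>. acs_iso br1 \<eta>1 \<omega>1 br2 \<eta>2 \<omega>2 \<Psi>"
  then show "\<exists>\<psi>. as_iso_on {x. \<eta>1 x = 0} br1 \<omega>1 {x. \<eta>2 x = 0} br2 \<omega>2 \<psi> \<and>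
      (\<forall>x\<in>{x. \<eta>1 x = 0}. \<psi> (br1 (reeb \<eta>1 \<omega>1) x) = br2 (reeb \<eta>2 \<omega>2) (\<psi> x))"
    using acs_iso_restrict_kernel reeb_eta[OF dim1 acs1] reeb_radical[OF dim1 acs1]
      reeb_unique[OF dim2 acs2] by blast
next
  assume "\<exists>\<psi>. as_iso_on {x. \<eta>1 x = 0} br1 \<omega>1 {x. \<eta>2 x = 0} br2 \<omega>2 \<psi> \<and>
      (\<forall>x\<in>{x. \<eta>1 x = 0}. \<psi> (br1 (reeb \<eta>1 \<omega>1) x) = br2 (reeb \<eta>2 \<omega>2) (\<psi> x))"
  then obtain \<psi> where \<psi>: "as_iso_on {x. \<eta>1 x = 0} br1 \<omega>1 {x. \<eta>2 x = 0} br2 \<omega>2 \<psi>"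
    and D: "\<And>h. \<eta>1 h = 0 \<Longrightarrow> \<psi> (br1 (reeb \<eta>1 \<omega>1) h) = br2 (reeb \<eta>2 \<omega>2) (\<psi> h)" by auto
  have closed: "\<eta>1 (br1 x y) = 0" for x y using closed1 unfolding d_eta_def by simp
  interpret kernel_iso \<eta>1 "reeb \<eta>1 \<omega>1" br1 \<omega>1 \<eta>2 "reeb \<eta>2 \<omega>2" br2 \<omega>2 \<psi>
    using acs1 acs2 \<psi> reeb_eta[OF dim1 acs1] reeb_eta[OF dim2 acs2]
    unfolding almost_cosymplectic_def by (intro kernel_iso.intro) auto
  have "acs_iso br1 \<eta>1 \<omega>1 br2 \<eta>2 \<omega>2 extension"
    using acs1 acs2 unfolding almost_cosymplectic_def
    by (intro acs_iso_extension D closed) (auto intro: reeb_radical[OF dim1 acs1] reeb_radical[OF dim2 acs2])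
  then show "\<exists>\<Psi>. acs_iso br1 \<eta>1 \<omega>1 br2 \<eta>2 \<omega>2 \<Psi>" by blast
qed

end
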